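(* Let $p=p(n)\le 1/2$ with $np\to\infty$, let $N=N(n)$ be an integer with $n-\sqrt n\le N\le n$, and let $d=d(n)$ be an integer with $d\ge np/2$. Let $A_1,\dots,A_d,B_1,\dots,B_d$ be independent $\mathrm{Bin}(N,p)$ random variables. Then the probability that the multisets $\{A_1,\dots,A_d\}$ and $\{B_1,\dots,B_d\}$ are equal is at most $\exp\big(-\Omega(\sqrt{np}\,\log(np))\big)$. *)

theory Defs
  imports "HOL-Probability.Probability"
begin

definition bin_vec :: "nat \<Rightarrow> nat \<Rightarrow> real \<Rightarrow> (nat \<Rightarrow> nat) pmf" where
  "bin_vec d N p = Pi_pmf {..<d} 0 (\<lambda>_. binomial_pmf N p)"

definition multiset_eq_prob :: "nat \<Rightarrow> nat \<Rightarrow> real \<Rightarrow> real" where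
  "multiset_eq_prob d N p =
     measure_pmf.prob (pair_pmf (bin_vec d N p) (bin_vec d N p))
       {(a, b). image_mset a (mset_set {..<d}) = image_mset b (mset_set {..<d})}"

end

theory Submission
  imports Defs "HOL-Combinatorics.Multiset_Permutations" "HOL-Real_Asymp.Real_Asymp"
begin

text \<open>
  Since A and B are independent and identically distributed, the probability that their multisets
  agree is at most the largest probability that the multiset of A equals a fixed multiset M with
  multiplicities c_k. That probability is the multinomial expression
  d! \<Prod>_k q_k^c_k / c_k! in the binomial weights q_k, and Stirling's formula bounds it by
  e d times a product of Poisson point masses with means d q_k. Each of these is at most 1,
  and at most 4 / sqrt (d q_k) once d q_k \<ge> 1. By Chebyshev's inequality some value near the mean N p has weight
  of order 1 / sqrt (N p), and the binomial weights decay slowly above the mean, so about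
  sqrt (N p) / 16 values have weight at least 1 / (14 sqrt (N p)). For them d q_k is of order
  sqrt (n p), whence a bound (C / (n p)^(1/4))^(sqrt (n p) / 16) = exp (- \<Omega> (sqrt (n p) log (n p))),
  up to the factor e d, which is absorbed because the bound improves as d grows.
\<close>

section \<open>Stirling-type bounds and Poisson point masses\<close>

lemma ln_add_one_le_cubic:
  fixes x :: real
  assumes "0 \<le> x"
  shows "ln (1 + x) \<le> x - x\<^sup>2 / 2 + x ^ 3 / 3"
proof -
  let ?f = "\<lambda>x::real. x - x\<^sup>2 / 2 + x ^ 3 / 3 - ln (1 + x)"
  have "?f 0 \<le> ?f x"
  proof (rule DERIV_nonneg_imp_nondecreasing[OF assms])
    fix y :: real
    assume "0 \<le> y"
    then have "(?f has_real_derivative y ^ 3 / (1 + y)) (at y)"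
      by (auto intro!: derivative_eq_intros simp: field_simps power2_eq_square power3_eq_cube)
    with \<open>0 \<le> y\<close> show "\<exists>D. (?f has_real_derivative D) (at y) \<and> 0 \<le> D"
      by auto
  qed
  then show ?thesis
    by simp
qed

text \<open>The term 1 / (2 c) only serves to make the induction go through.\<close>

lemma ln_fact_ge:
  assumes "1 \<le> c"
  shows "(real c + 1/2) * ln (real c) - real c + 1 / (2 * real c) \<le> ln (fact c)"
  using assms
proof (induction c rule: dec_induct)
  case base
  show ?case by simp
next
  case (step c)
  define x where "x = 1 / real c"
  have c: "1 \<le> real c"
    using step.hyps by simp
  have x: "0 < x" "x \<le> 1"
    using c by (auto simp: x_def)
  have "(real c + 1/2) * ln (1 + x) \<le> (real c + 1/2) * (x - x\<^sup>2 / 2 + x ^ 3 / 3)"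
    using ln_add_one_le_cubic[of x] x by (intro mult_left_mono) auto
  also have "\<dots> = 1 + x\<^sup>2 / 12 + x ^ 3 / 6"
    using c by (simp add: x_def field_simps power2_eq_square power3_eq_cube)
  also have "\<dots> \<le> 1 + x\<^sup>2 / 4"
    using x power_decreasing[of 2 3 x] by simp
  also have "\<dots> = 1 + 1 / (4 * real c * real c)"
    by (simp add: x_def power2_eq_square)
  also have "\<dots> \<le> 1 + 1 / (2 * real c * (real c + 1))"
    using c by (intro add_left_mono divide_left_mono) (auto simp: algebra_simps intro!: add_pos_pos mult_pos_pos)
  also have "1 / (2 * real c * (real c + 1)) = 1 / (2 * real c) - 1 / (2 * real (Suc c))"
    using c by (simp add: field_simps)
  finally have key: "(real c + 1/2) * ln (1 + x) \<le> 1 + (1 / (2 * real c) - 1 / (2 * real (Suc c)))" .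
  have "real (Suc c) = real c * (1 + x)"
    using c by (simp add: x_def field_simps)
  then have "ln (real (Suc c)) = ln (real c) + ln (1 + x)"
    using c x by (simp add: ln_mult del: of_nat_Suc)
  moreover have "ln (fact (Suc c)) = ln (fact c) + ln (real (Suc c))"
    by (simp add: ln_mult del: of_nat_Suc)
  ultimately show ?case
    using step.IH key by (simp add: algebra_simps)
qed

lemma fact_ge_sqrt_mult_pow:
  assumes "1 \<le> c"
  shows "sqrt (real c) * (real c / exp 1) ^ c \<le> fact c"
proof -
  have c: "1 \<le> real c"
    using assms by simp
  have "ln (sqrt (real c) * (real c / exp 1) ^ c) = (real c + 1/2) * ln (real c) - real c"
    using c by (simp add: ln_mult ln_sqrt ln_div ln_realpow algebra_simps)
  also have "\<dots> \<le> ln (fact c)"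
    using ln_fact_ge[OF assms] divide_nonneg_nonneg[of 1 "2 * real c"] by linarith
  finally show ?thesis
    using c by (subst (asm) ln_le_cancel_iff) auto
qed

lemma fact_le_exp_mult_pow:
  assumes "1 \<le> d"
  shows "fact d \<le> exp 1 * real d * (real d / exp 1) ^ d"
proof -
  have "ln (fact d) \<le> (real d + 1) * ln (real d) - real d + 1"
    using assms
  proof (induction d rule: dec_induct)
    case base
    show ?case by simp
  next
    case (step d)
    have d: "1 \<le> real d"
      using step.hyps by simp
    have "ln (real d / real (Suc d)) \<le> real d / real (Suc d) - 1"
      using d by (intro ln_le_minus_one) auto
    then have "real (Suc d) * (ln (real d) - ln (real (Suc d))) \<le> -1"
      using d by (simp add: ln_div field_simps del: of_nat_Suc)
    moreover have "ln (fact (Suc d)) = ln (fact d) + ln (real (Suc d))"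
      by (simp add: ln_mult del: of_nat_Suc)
    ultimately show ?case
      using step.IH by (simp add: algebra_simps)
  qed
  also have "\<dots> = ln (exp 1 * real d * (real d / exp 1) ^ d)"
    using assms by (simp add: ln_mult ln_div ln_realpow algebra_simps)
  finally show ?thesis
    using assms by (subst (asm) ln_le_cancel_iff) auto
qed

lemma poisson_point_mass_le_1:
  fixes l :: real
  assumes "0 \<le> l"
  shows "l ^ c / fact c * exp (- l) \<le> 1"
proof (cases "l = 0")
  case True
  then show ?thesis
    by (cases c) simp_all
next
  case False
  then show ?thesis
    using assms pmf_le_1[of "poisson_pmf l" c] by simp
qed

lemma poisson_point_mass_le_exp:
  fixes l :: real
  assumes "1 \<le> c" "0 < l"
  shows "l ^ c / fact c * exp (- l) \<le> exp (real c * ln (l / real c) + real c - l) / sqrt (real c)"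
proof -
  have c: "1 \<le> real c"
    using assms by simp
  have "l ^ c / fact c * exp (- l) \<le> l ^ c / (sqrt (real c) * (real c / exp 1) ^ c) * exp (- l)"
    using fact_ge_sqrt_mult_pow[OF assms(1)] c assms(2)
    by (intro mult_right_mono divide_left_mono) auto
  also have "\<dots> = (l * exp 1 / real c) ^ c * exp (- l) / sqrt (real c)"
    by (simp add: field_simps)
  also have "(l * exp 1 / real c) ^ c = exp (real c * ln (l * exp 1 / real c))"
    using assms c by (simp add: exp_of_nat_mult)
  also have "ln (l * exp 1 / real c) = ln (l / real c) + 1"
    using assms c by (simp add: ln_mult ln_div)
  finally show ?thesis
    by (simp add: exp_add exp_diff exp_minus field_simps)
qed

lemma exp_neg_quarter_le_inv_sqrt:
  fixes l :: real
  assumes "1 \<le> l"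
  shows "exp (- l / 4) \<le> 4 / sqrt l"
proof -
  have "sqrt l \<le> l"
    using assms real_sqrt_le_mono[of l "l * l"] by (simp add: mult_le_cancel_left1)
  then have "sqrt l / 4 \<le> exp (l / 4)"
    using exp_ge_add_one_self[of "l / 4"] by linarith
  then show ?thesis
    using assms by (simp add: exp_minus field_simps)
qed

lemma mult_ln_div_le:
  fixes x y :: real
  assumes "0 < x" "0 < y"
  shows "x * ln (y / x) \<le> y - x"
proof -
  have "x * ln (y / x) \<le> x * (y / x - 1)"
    using assms by (intro mult_left_mono ln_le_minus_one) auto
  also have "\<dots> = y - x"
    using assms by (simp add: field_simps)
  finally show ?thesis .
qed

lemma mult_ln_div_le_of_four_le:
  fixes x y :: real
  assumes "0 < x" "4 * x \<le> y"
  shows "x * ln (y / x) \<le> 3 / 4 * y - x"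
proof -
  have "x * ln (y / x / 2) \<le> y / 2 - x"
    using mult_ln_div_le[of x "y / 2"] assms by (simp add: field_simps)
  moreover have "x * ln (y / x) = x * ln (y / x / 2) + x * ln 2"
    using assms by (subst ln_div) (auto simp: algebra_simps)
  moreover have "x * ln 2 \<le> y / 4"
    using ln_le_minus_one[of 2] assms mult_left_mono[of "ln 2" 1 x] by linarith
  ultimately show ?thesis
    by linarith
qed

lemma poisson_point_mass_le_inv_sqrt:
  fixes l :: real
  assumes "1 \<le> l"
  shows "l ^ c / fact c * exp (- l) \<le> 4 / sqrt l"
proof (cases "c = 0")
  case True
  have "exp (- l) \<le> exp (- l / 4)"
    using assms by simp
  also have "\<dots> \<le> 4 / sqrt l"
    using exp_neg_quarter_le_inv_sqrt[OF assms] .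
  finally show ?thesis
    using True by simp
next
  case False
  then have c: "1 \<le> c" "1 \<le> real c"
    by simp_all
  define e where "e = real c * ln (l / real c) + real c - l"
  have "l ^ c / fact c * exp (- l) \<le> exp e / sqrt (real c)"
    unfolding e_def using c assms by (intro poisson_point_mass_le_exp) auto
  also have "\<dots> \<le> 4 / sqrt l"
  proof (cases "4 * real c \<le> l")
    case True
    then have "e \<le> - l / 4"
      using mult_ln_div_le_of_four_le[of "real c" l] c by (simp add: e_def)
    then have "exp e / sqrt (real c) \<le> exp (- l / 4) / 1"
      using c by (intro frac_le) auto
    then show ?thesis
      using exp_neg_quarter_le_inv_sqrt[OF assms] by linarith
  next
    case False
    have "e \<le> 0"
      using mult_ln_div_le[of "real c" l] c assms by (simp add: e_def)
    then have "exp e / sqrt (real c) \<le> 1 / sqrt (l / 4)"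
      using False c assms by (intro frac_le) auto
    also have "\<dots> \<le> 4 / sqrt l"
      using assms by (simp add: real_sqrt_divide divide_right_mono)
    finally show ?thesis .
  qed
  finally show ?thesis .
qed

section \<open>Multinomial probabilities of i.i.d. vectors\<close>

lemma multinomial_le_poisson_product:
  fixes q :: "'a \<Rightarrow> real" and c :: "'a \<Rightarrow> nat"
  assumes "finite W" and q: "\<And>k. k \<in> W \<Longrightarrow> 0 \<le> q k" "sum q W \<le> 1"
    and c: "sum c W = d" and d: "1 \<le> d"
  shows "fact d * (\<Prod>k\<in>W. q k ^ c k / fact (c k))
    \<le> exp 1 * real d * (\<Prod>k\<in>W. (real d * q k) ^ c k / fact (c k) * exp (- (real d * q k)))"
proof -
  let ?P = "\<Prod>k\<in>W. q k ^ c k / fact (c k)"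
  have P: "0 \<le> ?P"
    using q by (intro prod_nonneg) auto
  have "(\<Prod>k\<in>W. (real d * q k) ^ c k / fact (c k) * exp (- (real d * q k)))
      = (\<Prod>k\<in>W. real d ^ c k) * ?P * (\<Prod>k\<in>W. exp (- (real d * q k)))"
    by (simp add: power_mult_distrib flip: prod.distrib)
  also have "\<dots> = real d ^ d * ?P * exp (- real d * sum q W)"
    using assms by (simp add: exp_sum sum_distrib_left flip: power_sum)
  finally have prod_eq: "(\<Prod>k\<in>W. (real d * q k) ^ c k / fact (c k) * exp (- (real d * q k)))
      = real d ^ d * exp (- real d * sum q W) * ?P"
    by simp
  have "fact d * ?P \<le> exp 1 * real d * (real d / exp 1) ^ d * ?P"
    using fact_le_exp_mult_pow[OF d] P by (rule mult_right_mono)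
  also have "(real d / exp 1) ^ d = real d ^ d * exp (- real d)"
    by (simp add: exp_minus field_simps flip: exp_of_nat_mult)
  also have "exp (- real d) \<le> exp (- real d * sum q W)"
    using q d by (simp add: mult_left_le)
  finally show ?thesis
    using P d unfolding prod_eq by (simp add: mult_left_mono mult_right_mono mult.assoc)
qed

lemma multinomial_le_inv_sqrt_pow:
  fixes q :: "'a \<Rightarrow> real" and c :: "'a \<Rightarrow> nat"
  assumes W: "finite W" and q: "\<And>k. k \<in> W \<Longrightarrow> 0 \<le> q k" "sum q W \<le> 1"
    and c: "sum c W = d" and d: "1 \<le> d"
    and K: "K \<subseteq> W" and t: "1 \<le> t" and large: "\<And>k. k \<in> K \<Longrightarrow> t \<le> real d * q k"
  shows "fact d * (\<Prod>k\<in>W. q k ^ c k / fact (c k)) \<le> exp 1 * real d * (4 / sqrt t) ^ card K"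
proof -
  define \<pi> where "\<pi> k = (real d * q k) ^ c k / fact (c k) * exp (- (real d * q k))" for k
  have \<pi>_le_1: "0 \<le> \<pi> k \<and> \<pi> k \<le> 1" if "k \<in> W" for k
    using q(1)[OF that] poisson_point_mass_le_1[of "real d * q k" "c k"] unfolding \<pi>_def by simp
  have "(\<Prod>k\<in>W. \<pi> k) = (\<Prod>k\<in>K. \<pi> k) * (\<Prod>k\<in>W - K. \<pi> k)"
    using prod.subset_diff[OF K W] by (simp add: mult.commute)
  also have "\<dots> \<le> (\<Prod>k\<in>K. \<pi> k)"
    using \<pi>_le_1 K by (intro mult_right_le_one_le prod_nonneg prod_le_1) auto
  also have "\<dots> \<le> (\<Prod>k\<in>K. 4 / sqrt t)"
  proof (rule prod_mono)
    fix k
    assume "k \<in> K"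
    have "\<pi> k \<le> 4 / sqrt (real d * q k)"
      unfolding \<pi>_def using large[OF \<open>k \<in> K\<close>] t by (intro poisson_point_mass_le_inv_sqrt) auto
    also have "\<dots> \<le> 4 / sqrt t"
      using large[OF \<open>k \<in> K\<close>] t by (intro divide_left_mono) auto
    finally show "0 \<le> \<pi> k \<and> \<pi> k \<le> 4 / sqrt t"
      using \<pi>_le_1 \<open>k \<in> K\<close> K by auto
  qed
  finally have \<pi>_prod: "(\<Prod>k\<in>W. \<pi> k) \<le> (4 / sqrt t) ^ card K"
    by simp
  have "fact d * (\<Prod>k\<in>W. q k ^ c k / fact (c k)) \<le> exp 1 * real d * (\<Prod>k\<in>W. \<pi> k)"
    unfolding \<pi>_def by (rule multinomial_le_poisson_product[OF W q c d])
  also have "\<dots> \<le> exp 1 * real d * (4 / sqrt t) ^ card K"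
    using \<pi>_prod by (intro mult_left_mono) auto
  finally show ?thesis .
qed

lemma prob_pair_pmf_same_value_le:
  fixes X :: "'a pmf" and F :: "'a \<Rightarrow> 'b"
  assumes fibre: "\<And>m. measure_pmf.prob X {x. F x = m} \<le> \<beta>"
  shows "measure_pmf.prob (pair_pmf X X) {(x, y). F x = F y} \<le> \<beta>"
proof -
  let ?S = "{(x, y). F x = F y}"
  have "0 \<le> \<beta>"
    using fibre[of undefined] measure_nonneg[of X] by (meson order_trans)
  have "emeasure (pair_pmf X X) ?S = (\<integral>\<^sup>+x. \<integral>\<^sup>+y. indicator ?S (x, y) \<partial>X \<partial>X)"
    by (simp add: nn_integral_pair_pmf' flip: nn_integral_indicator)
  also have "\<dots> = (\<integral>\<^sup>+x. emeasure X {y. F y = F x} \<partial>X)"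
  proof (intro nn_integral_cong)
    fix x
    have "(\<lambda>y. indicator ?S (x, y) :: ennreal) = indicator {y. F y = F x}"
      by (auto simp: indicator_def)
    then show "(\<integral>\<^sup>+y. indicator ?S (x, y) \<partial>X) = emeasure X {y. F y = F x}"
      by simp
  qed
  also have "\<dots> \<le> (\<integral>\<^sup>+x. ennreal \<beta> \<partial>X)"
    using fibre by (intro nn_integral_mono) (simp add: measure_pmf.emeasure_eq_measure ennreal_leI)
  finally show ?thesis
    using \<open>0 \<le> \<beta>\<close> by (simp add: measure_pmf.emeasure_eq_measure)
qed

lemma prob_Pi_pmf_image_mset_eq_le:
  fixes Q :: "'b pmf" and M :: "'b multiset" and d :: nat and z :: 'b
  defines "X \<equiv> Pi_pmf {..<d} z (\<lambda>_. Q)"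
  shows "measure_pmf.prob X {a. image_mset a (mset_set {..<d}) = M}
    \<le> real (card (permutations_of_multiset M)) * (\<Prod>k\<in>set_mset M. pmf Q k ^ count M k)"
proof -
  define T where "T = {a. image_mset a (mset_set {..<d}) = M} \<inter> set_pmf X"
  define to_list where "to_list a = map a [0..<d]" for a :: "nat \<Rightarrow> 'b"
  have extensional: "a i = z" if "a \<in> T" "i \<notin> {..<d}" for a i
    using that set_Pi_pmf_subset[of "{..<d}" z "\<lambda>_. Q"] unfolding T_def X_def by auto
  have inj: "inj_on to_list T"
  proof (rule inj_onI)
    fix a b
    assume "a \<in> T" "b \<in> T" "to_list a = to_list b"
    then show "a = b"
      using extensional[of a] extensional[of b] by (fastforce simp: to_list_def)
  qed
  have img: "to_list ` T \<subseteq> permutations_of_multiset M"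
    by (auto simp: T_def to_list_def atLeast_upt intro!: permutations_of_multisetI)
  have "finite T"
    using finite_subset[OF img finite_permutations_of_multiset] inj by (rule finite_imageD)
  have card_T: "card T \<le> card (permutations_of_multiset M)"
    using card_inj_on_le[OF inj img finite_permutations_of_multiset] .
  have pmf_X: "pmf X a = (\<Prod>k\<in>set_mset M. pmf Q k ^ count M k)" if "a \<in> T" for a
  proof -
    have "pmf X a = (\<Prod>i\<in>{..<d}. pmf Q (a i))"
      unfolding X_def using extensional[OF that] by (simp add: pmf_Pi)
    also have "\<dots> = prod_mset (image_mset (pmf Q) (image_mset a (mset_set {..<d})))"
      by (simp add: prod_unfold_prod_mset image_mset.compositionality comp_def)
    also have "image_mset a (mset_set {..<d}) = M"
      using that by (simp add: T_def)
    finally show ?thesis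
      by (simp add: image_prod_mset_multiplicity)
  qed
  have "measure_pmf.prob X {a. image_mset a (mset_set {..<d}) = M} = sum (pmf X) T"
    using \<open>finite T\<close> unfolding T_def by (simp add: measure_Int_set_pmf flip: measure_measure_pmf_finite)
  also have "\<dots> = real (card T) * (\<Prod>k\<in>set_mset M. pmf Q k ^ count M k)"
    using pmf_X by simp
  also have "\<dots> \<le> real (card (permutations_of_multiset M)) * (\<Prod>k\<in>set_mset M. pmf Q k ^ count M k)"
    using card_T by (intro mult_right_mono prod_nonneg) auto
  finally show ?thesis .
qed

lemma prob_Pi_pmf_image_mset_eq_le_multinomial:
  fixes Q :: "'b pmf" and M :: "'b multiset"
  assumes "size M = d"
  shows "measure_pmf.prob (Pi_pmf {..<d} z (\<lambda>_. Q)) {a. image_mset a (mset_set {..<d}) = M}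
    \<le> fact d * (\<Prod>k\<in>set_mset M. pmf Q k ^ count M k / fact (count M k))"
proof -
  have "real (card (permutations_of_multiset M)) * (\<Prod>k\<in>set_mset M. fact (count M k)) = fact d"
    using assms arg_cong[OF card_permutations_of_multiset_aux[of M], of real] by simp
  moreover have "(\<Prod>k\<in>set_mset M. fact (count M k) :: real) > 0"
    by (intro prod_pos) auto
  ultimately have "real (card (permutations_of_multiset M)) * (\<Prod>k\<in>set_mset M. pmf Q k ^ count M k)
      = fact d * (\<Prod>k\<in>set_mset M. pmf Q k ^ count M k / fact (count M k))"
    by (simp add: prod_dividef field_simps)
  then show ?thesis
    using prob_Pi_pmf_image_mset_eq_le[of d z Q M] by simp
qed

section \<open>The binomial distribution\<close>

lemma expectation_binomial_pmf_Suc: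
  fixes f :: "nat \<Rightarrow> real"
  assumes p: "p \<in> {0..1}"
  shows "measure_pmf.expectation (binomial_pmf (Suc n) p) f =
    (1 - p) * measure_pmf.expectation (binomial_pmf n p) f
    + p * measure_pmf.expectation (binomial_pmf n p) (\<lambda>k. f (Suc k))"
proof -
  have "binomial_pmf (Suc n) p =
      bernoulli_pmf p \<bind> (\<lambda>b. map_pmf (\<lambda>k. (if b then 1 else 0) + k) (binomial_pmf n p))"
    using p by (simp add: binomial_pmf_Suc map_pmf_def)
  also have "measure_pmf.expectation \<dots> f = (\<Sum>b\<in>UNIV. pmf (bernoulli_pmf p) b *
      measure_pmf.expectation (binomial_pmf n p) (\<lambda>k. f ((if b then 1 else 0) + k)))"
    using p by (subst pmf_expectation_bind[of UNIV]) (auto simp: finite_set_pmf_binomial_pmf)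
  finally show ?thesis
    using p by (simp add: UNIV_bool algebra_simps)
qed

lemma expectation_binomial_pmf_real:
  assumes p: "p \<in> {0..1}"
  shows "measure_pmf.expectation (binomial_pmf n p) real = real n * p"
proof (induction n)
  case 0
  show ?case
    using p by (simp add: binomial_pmf_0)
next
  case (Suc n)
  have "measure_pmf.expectation (binomial_pmf n p) (\<lambda>k. 1 + real k) = 1 + real n * p"
    using p Suc.IH by simp
  then show ?case
    using p Suc.IH by (simp add: expectation_binomial_pmf_Suc algebra_simps)
qed

lemma expectation_binomial_pmf_real_squared:
  assumes p: "p \<in> {0..1}"
  shows "measure_pmf.expectation (binomial_pmf n p) (\<lambda>k. (real k)\<^sup>2) = real n * p * (1 - p) + (real n * p)\<^sup>2"
proof (induction n)
  case 0
  show ?case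
    using p by (simp add: binomial_pmf_0)
next
  case (Suc n)
  have "measure_pmf.expectation (binomial_pmf n p) (\<lambda>k. (real (Suc k))\<^sup>2) =
      measure_pmf.expectation (binomial_pmf n p) (\<lambda>k. (real k)\<^sup>2)
      + 2 * measure_pmf.expectation (binomial_pmf n p) real + 1"
    using p by (simp add: power2_eq_square algebra_simps)
  then show ?case
    using p Suc.IH by (simp add: expectation_binomial_pmf_Suc expectation_binomial_pmf_real
        power2_eq_square algebra_simps)
qed

lemma variance_binomial_pmf:
  assumes p: "p \<in> {0..1}"
  shows "measure_pmf.expectation (binomial_pmf n p) (\<lambda>k. (real k - real n * p)\<^sup>2) = real n * p * (1 - p)"
  using measure_pmf.variance_eq[of "binomial_pmf n p" real] p
  by (simp add: expectation_binomial_pmf_real expectation_binomial_pmf_real_squared)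

lemma prob_binomial_pmf_near_mean_ge:
  assumes p: "p \<in> {0..1}" and t: "0 < t"
  shows "1 - real n * p * (1 - p) / t\<^sup>2
    \<le> measure_pmf.prob (binomial_pmf n p) {k. \<bar>real k - real n * p\<bar> < t}"
proof -
  let ?far = "{k. t \<le> \<bar>real k - real n * p\<bar>}"
  have "measure_pmf.prob (binomial_pmf n p) ?far \<le> real n * p * (1 - p) / t\<^sup>2"
    using measure_pmf.Chebyshev_inequality[where M = "binomial_pmf n p" and f = real and a = t] p t
    by (simp add: expectation_binomial_pmf_real variance_binomial_pmf)
  moreover have "{k. \<bar>real k - real n * p\<bar> < t} = UNIV - ?far"
    by auto
  ultimately show ?thesis
    using measure_pmf.prob_compl[of ?far "binomial_pmf n p"] by simp
qed

lemma pmf_binomial_Suc_mult: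
  assumes p: "p \<in> {0..1}" and "i < n"
  shows "pmf (binomial_pmf n p) (Suc i) * (real (Suc i) * (1 - p)) = pmf (binomial_pmf n p) i * (real (n - i) * p)"
proof -
  have "Suc i * (n choose Suc i) = n * ((n - 1) choose i)"
    by (rule binomial_absorption)
  also have "\<dots> = (n - i) * (n choose i)"
    by (rule binomial_absorb_comp[symmetric])
  finally
  have choose: "real (Suc i) * real (n choose Suc i) = real (n - i) * real (n choose i)"
    by (metis of_nat_mult)
  have "(1 - p) ^ (n - i) = (1 - p) ^ (n - Suc i) * (1 - p)"
    using \<open>i < n\<close> by (metis Suc_diff_Suc power_Suc2)
  then show ?thesis
    using p choose by (simp add: mult_ac)
qed

lemma pmf_binomial_Suc_ge:
  assumes p: "0 < p" "p \<le> 1/2" and "i < n" and a: "0 \<le> a"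
    and i: "real i \<le> real n * p + a" and mean: "2 * (a + 1) \<le> real n * p"
  shows "(1 - 2 * (a + 1) / (real n * p)) * pmf (binomial_pmf n p) i \<le> pmf (binomial_pmf n p) (Suc i)"
proof -
  define \<mu> where "\<mu> = real n * p"
  define \<delta> where "\<delta> = 2 * (a + 1) / \<mu>"
  have "0 < \<mu>"
    using mean a unfolding \<mu>_def by (smt (verit))
  have \<delta>: "0 \<le> \<delta>" "\<delta> \<le> 1"
    using mean a \<open>0 < \<mu>\<close> unfolding \<delta>_def \<mu>_def[symmetric] by (auto simp: field_simps)
  have "(1 - \<delta>) * (real (Suc i) * (1 - p)) \<le> (1 - \<delta>) * ((\<mu> + a + 1) * (1 - p))"
    using \<delta> p i unfolding \<mu>_def by (intro mult_left_mono mult_right_mono) auto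
  also have "\<dots> = (1 - p) * (\<mu> - (a + 1) - \<delta> * (a + 1))"
    using \<open>0 < \<mu>\<close> unfolding \<delta>_def by (simp add: field_simps)
  also have "\<dots> \<le> (1 - p) * (\<mu> - a - 1)"
    using p \<delta> a by (intro mult_left_mono) auto
  also have "\<dots> \<le> (real n - \<mu> - a) * p"
    using p a mult_left_mono[of p "1/2" a] unfolding \<mu>_def by (simp add: algebra_simps)
  also have "\<dots> \<le> real (n - i) * p"
    using \<open>i < n\<close> i p unfolding \<mu>_def by (intro mult_right_mono) auto
  finally have "pmf (binomial_pmf n p) i * ((1 - \<delta>) * (real (Suc i) * (1 - p)))
      \<le> pmf (binomial_pmf n p) i * (real (n - i) * p)"
    by (rule mult_left_mono) simp
  also have "\<dots> = pmf (binomial_pmf n p) (Suc i) * (real (Suc i) * (1 - p))"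
    using p \<open>i < n\<close> by (intro pmf_binomial_Suc_mult[symmetric]) auto
  finally have "((1 - \<delta>) * pmf (binomial_pmf n p) i) * (real (Suc i) * (1 - p))
      \<le> pmf (binomial_pmf n p) (Suc i) * (real (Suc i) * (1 - p))"
    by (simp only: mult_ac)
  moreover have "0 < real (Suc i) * (1 - p)"
    using p by simp
  ultimately show ?thesis
    unfolding \<delta>_def \<mu>_def by (rule mult_right_le_imp_le)
qed

lemma pmf_binomial_add_ge:
  assumes p: "0 < p" "p \<le> 1/2" and a: "0 \<le> a" and mean: "2 * (a + 1) \<le> real n * p"
    and "k + j \<le> n" and "real (k + j) \<le> real n * p + a"
  shows "(1 - 2 * (a + 1) / (real n * p)) ^ j * pmf (binomial_pmf n p) k \<le> pmf (binomial_pmf n p) (k + j)"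
  using assms(5,6)
proof (induction j)
  case 0
  show ?case by simp
next
  case (Suc j)
  define \<delta> where "\<delta> = 2 * (a + 1) / (real n * p)"
  have "0 \<le> 1 - \<delta>"
    using mean a p unfolding \<delta>_def by (auto simp: field_simps)
  then have "(1 - \<delta>) ^ Suc j * pmf (binomial_pmf n p) k \<le> (1 - \<delta>) * pmf (binomial_pmf n p) (k + j)"
    using Suc unfolding \<delta>_def by (simp add: mult.assoc mult_left_mono)
  also have "\<dots> \<le> pmf (binomial_pmf n p) (Suc (k + j))"
    unfolding \<delta>_def using Suc.prems by (intro pmf_binomial_Suc_ge p a mean) auto
  finally show ?case
    unfolding \<delta>_def by simp
qed

lemma pmf_binomial_add_ge_half:
  assumes p: "0 < p" "p \<le> 1/2" and a: "0 \<le> a" and mean: "2 * (a + 1) \<le> real n * p"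
    and "k + j \<le> n" and "real (k + j) \<le> real n * p + a"
    and j: "real j * (2 * (a + 1) / (real n * p)) \<le> 1 / 2"
  shows "pmf (binomial_pmf n p) k / 2 \<le> pmf (binomial_pmf n p) (k + j)"
proof -
  define \<delta> where "\<delta> = 2 * (a + 1) / (real n * p)"
  have "\<delta> \<le> 1"
    using mean a p by (simp add: \<delta>_def)
  have "1 / 2 \<le> 1 - real j * \<delta>"
    using j by (simp add: \<delta>_def)
  also have "\<dots> \<le> (1 - \<delta>) ^ j"
    using Bernoulli_inequality[of "- \<delta>" j] \<open>\<delta> \<le> 1\<close> by simp
  finally have "1 / 2 * pmf (binomial_pmf n p) k \<le> (1 - \<delta>) ^ j * pmf (binomial_pmf n p) k"
    by (rule mult_right_mono) simp
  also have "\<dots> \<le> pmf (binomial_pmf n p) (k + j)"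
    unfolding \<delta>_def using assms by (intro pmf_binomial_add_ge) auto
  finally show ?thesis
    by simp
qed

lemma card_le_of_subset_interval:
  fixes x w :: real
  assumes "0 \<le> w" and A: "A \<subseteq> {k::nat. x \<le> real k \<and> real k \<le> x + w}"
  shows "real (card A) \<le> w + 1"
proof -
  have "A \<subseteq> {nat \<lceil>x\<rceil>..<nat \<lceil>x\<rceil> + nat \<lfloor>w\<rfloor> + 1}"
  proof
    fix k
    assume "k \<in> A"
    then have "x \<le> real k" "real k \<le> x + w"
      using A by auto
    moreover have "x \<le> real (nat \<lceil>x\<rceil>)" "w < real (nat \<lfloor>w\<rfloor>) + 1"
      using \<open>0 \<le> w\<close> by linarith+
    moreover have "nat \<lceil>x\<rceil> \<le> k"
      using \<open>x \<le> real k\<close> by (simp add: nat_le_iff ceiling_le_iff)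
    ultimately show "k \<in> {nat \<lceil>x\<rceil>..<nat \<lceil>x\<rceil> + nat \<lfloor>w\<rfloor> + 1}"
      by simp linarith
  qed
  then have "card A \<le> nat \<lfloor>w\<rfloor> + 1"
    using card_mono[of "{nat \<lceil>x\<rceil>..<nat \<lceil>x\<rceil> + nat \<lfloor>w\<rfloor> + 1}" A] by simp
  then show ?thesis
    using \<open>0 \<le> w\<close> by linarith
qed

lemma ex_ge_average:
  fixes f :: "'a \<Rightarrow> real"
  assumes "finite A" "A \<noteq> {}"
  shows "\<exists>k\<in>A. sum f A / real (card A) \<le> f k"
proof -
  have "Max (f ` A) \<in> f ` A"
    using assms by (intro Max_in) auto
  then obtain k where "k \<in> A" "f k = Max (f ` A)"
    by auto
  then have "sum f A \<le> real (card A) * f k"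
    using assms by (intro sum_bounded_above) simp
  then show ?thesis
    using \<open>k \<in> A\<close> assms by (auto simp: divide_le_eq mult.commute intro: bexI[of _ k])
qed

lemma ex_binomial_pmf_ge_near_mean:
  assumes p: "p \<in> {0..1}" and \<mu>: "1 \<le> real n * p"
  shows "\<exists>k. \<bar>real k - real n * p\<bar> \<le> 2 * sqrt (real n * p)
    \<and> 3 / (20 * sqrt (real n * p)) \<le> pmf (binomial_pmf n p) k"
proof -
  define \<mu> where "\<mu> = real n * p"
  define s where "s = sqrt \<mu>"
  have s: "1 \<le> s" "s\<^sup>2 = \<mu>" "0 < \<mu>"
    using \<mu> by (simp_all add: s_def \<mu>_def)
  define W where "W = {k. \<bar>real k - \<mu>\<bar> < 2 * s}"
  have "W \<subseteq> {..nat \<lceil>\<mu> + 2 * s\<rceil>}"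
    by (auto simp: W_def le_nat_iff) linarith
  then have "finite W"
    using finite_subset by blast
  have W_sub: "W \<subseteq> {k. \<mu> - 2 * s \<le> real k \<and> real k \<le> \<mu> - 2 * s + 4 * s}"
    by (auto simp: W_def)
  have card_W: "real (card W) \<le> 5 * s"
    using card_le_of_subset_interval[OF _ W_sub] s by simp
  have "1 - \<mu> * (1 - p) / (2 * s)\<^sup>2 \<le> sum (pmf (binomial_pmf n p)) W"
    using prob_binomial_pmf_near_mean_ge[OF p, of "2 * s" n] s \<open>finite W\<close>
    by (simp add: W_def \<mu>_def measure_measure_pmf_finite)
  moreover have "\<mu> * (1 - p) / (2 * s)\<^sup>2 \<le> 1 / 4"
    using s p by (simp add: power_mult_distrib)
  ultimately have mass: "3 / 4 \<le> sum (pmf (binomial_pmf n p)) W"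
    by linarith
  then have "W \<noteq> {}"
    by auto
  then obtain k where "k \<in> W" and k: "sum (pmf (binomial_pmf n p)) W / real (card W) \<le> pmf (binomial_pmf n p) k"
    using ex_ge_average[OF \<open>finite W\<close>] by blast
  have "0 < real (card W)"
    using \<open>W \<noteq> {}\<close> \<open>finite W\<close> by (simp add: card_gt_0_iff)
  then have "3 / (20 * s) \<le> 3 / 4 / real (card W)"
    using card_W by (simp add: field_simps)
  also have "\<dots> \<le> sum (pmf (binomial_pmf n p)) W / real (card W)"
    using mass \<open>0 < real (card W)\<close> by (intro divide_right_mono) auto
  finally show ?thesis
    using \<open>k \<in> W\<close> k unfolding W_def s_def \<mu>_def by (intro exI[of _ k]) auto
qed

text \<open>
  Starting from a heavy value k0 near the mean, the weights lose at most a factor 2 over the next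
  sqrt (n p) / 16 values.
\<close>

lemma ex_many_binomial_pmf_ge:
  assumes p: "0 < p" "p \<le> 1/2" and \<mu>: "1024 \<le> real n * p"
  shows "\<exists>K. finite K \<and> sqrt (real n * p) / 16 \<le> real (card K)
    \<and> (\<forall>k\<in>K. 1 / (14 * sqrt (real n * p)) \<le> pmf (binomial_pmf n p) k)"
proof -
  define \<mu> where "\<mu> = real n * p"
  define s where "s = sqrt \<mu>"
  have s: "32 \<le> s" "s * s = \<mu>"
    using \<mu> real_sqrt_le_mono[of "32\<^sup>2" \<mu>] by (simp_all add: s_def \<mu>_def)
  obtain k0 where "\<bar>real k0 - \<mu>\<bar> \<le> 2 * s" "3 / (20 * s) \<le> pmf (binomial_pmf n p) k0"
    using ex_binomial_pmf_ge_near_mean[of p n] p \<mu> unfolding s_def \<mu>_def by auto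
  then have k0: "real k0 \<le> \<mu> + 2 * s" "3 / (20 * s) \<le> pmf (binomial_pmf n p) k0"
    by auto
  define L where "L = nat \<lfloor>s / 16\<rfloor>"
  have L: "real L \<le> s / 16" "s / 16 \<le> real L + 1"
    using s by (simp_all add: L_def) linarith+
  define a where "a = 3 * s"
  have "0 \<le> a" and mean: "2 * (a + 1) \<le> real n * p"
    using s mult_right_mono[of 32 s s] unfolding a_def \<mu>_def[symmetric] by auto
  have top: "real (k0 + L) \<le> real n * p + a"
    using k0 L unfolding a_def \<mu>_def by simp
  moreover have "real n * p + a \<le> real n"
    using s p mult_right_mono[of 32 s s] mult_left_mono[of p "1/2" "real n"]
    unfolding a_def \<mu>_def[symmetric] by auto
  ultimately have "k0 + L \<le> n"
    by linarith
  have L_small: "real L * (2 * (a + 1) / (real n * p)) \<le> 1 / 2"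
  proof -
    have "real L * (2 * (a + 1) / (real n * p)) = real L * ((6 * s + 2) / (s * s))"
      by (simp add: a_def s(2) \<mu>_def)
    also have "\<dots> \<le> s / 16 * ((6 * s + 2) / (s * s))"
      using L s by (intro mult_right_mono) auto
    also have "\<dots> = (6 * s + 2) / (16 * s)"
      using s(1) by (simp add: field_simps)
    also have "\<dots> \<le> 1 / 2"
      using s(1) by (simp add: field_simps)
    finally show ?thesis .
  qed
  have "1 / (14 * s) \<le> pmf (binomial_pmf n p) k" if "k \<in> {k0..k0 + L}" for k
  proof -
    define j where "j = k - k0"
    have j: "k = k0 + j" "j \<le> L"
      using that by (auto simp: j_def)
    have "real j * (2 * (a + 1) / (real n * p)) \<le> real L * (2 * (a + 1) / (real n * p))"
      using j(2) \<open>0 \<le> a\<close> p \<mu> by (intro mult_right_mono) auto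
    then have j_small: "real j * (2 * (a + 1) / (real n * p)) \<le> 1 / 2"
      using L_small by linarith
    have "1 / (14 * s) \<le> 3 / (20 * s) / 2"
      using s(1) by (simp add: field_simps)
    also have "\<dots> \<le> pmf (binomial_pmf n p) k0 / 2"
      using k0(2) by (rule divide_right_mono) simp
    also have "\<dots> \<le> pmf (binomial_pmf n p) k"
      unfolding j(1) using \<open>k0 + L \<le> n\<close> top j(2)
      by (intro pmf_binomial_add_ge_half[OF p \<open>0 \<le> a\<close> mean _ _ j_small]) auto
    finally show ?thesis .
  qed
  moreover have "s / 16 \<le> real (card {k0..k0 + L})"
    using L by simp
  ultimately show ?thesis
    unfolding s_def \<mu>_def by (intro exI[of _ "{k0..k0 + L}"]) auto
qed

section \<open>The collision probability\<close>

lemma multiset_eq_prob_le: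
  assumes p: "0 < p" "p \<le> 1/2" and \<mu>: "1024 \<le> real N * p"
    and t: "16 \<le> t" "14 * sqrt (real N * p) * t \<le> real d"
  shows "multiset_eq_prob d N p \<le> exp 1 * real d * (4 / sqrt t) powr (sqrt (real N * p) / 16)"
proof -
  define B where "B = binomial_pmf N p"
  define r where "r = 4 / sqrt t"
  have r: "0 < r" "r \<le> 1"
    using t by (auto simp: r_def real_le_rsqrt)
  have "1 \<le> d"
    using t \<mu> p by (cases d) (auto simp: mult_le_0_iff)
  obtain K where K: "finite K" "sqrt (real N * p) / 16 \<le> real (card K)"
    and large: "\<And>k. k \<in> K \<Longrightarrow> 1 / (14 * sqrt (real N * p)) \<le> pmf B k"
    using ex_many_binomial_pmf_ge[OF p \<mu>] unfolding B_def by blast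
  have fibre: "measure_pmf.prob (bin_vec d N p) {a. image_mset a (mset_set {..<d}) = M}
      \<le> exp 1 * real d * r ^ card K" for M
  proof (cases "size M = d")
    case True
    define W where "W = set_mset M \<union> K"
    have "finite W"
      using K by (simp add: W_def)
    have "measure_pmf.prob (bin_vec d N p) {a. image_mset a (mset_set {..<d}) = M}
        \<le> fact d * (\<Prod>k\<in>set_mset M. pmf B k ^ count M k / fact (count M k))"
      unfolding bin_vec_def B_def using True by (rule prob_Pi_pmf_image_mset_eq_le_multinomial)
    also have "(\<Prod>k\<in>set_mset M. pmf B k ^ count M k / fact (count M k))
        = (\<Prod>k\<in>W. pmf B k ^ count M k / fact (count M k))"
      using \<open>finite W\<close> by (intro prod.mono_neutral_left) (auto simp: W_def not_in_iff)
    also have "fact d * \<dots> \<le> exp 1 * real d * r ^ card K"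
      unfolding r_def
    proof (rule multinomial_le_inv_sqrt_pow[OF \<open>finite W\<close>])
      show "sum (pmf B) W \<le> 1"
        using \<open>finite W\<close> measure_pmf.prob_le_1[of B W] by (simp add: measure_measure_pmf_finite)
      have "sum (count M) W = sum (count M) (set_mset M)"
        using \<open>finite W\<close> by (intro sum.mono_neutral_right) (auto simp: W_def not_in_iff)
      then show "sum (count M) W = d"
        using True by (simp add: size_multiset_overloaded_eq)
      show "t \<le> real d * pmf B k" if "k \<in> K" for k
      proof -
        have "t \<le> real d * (1 / (14 * sqrt (real N * p)))"
          using t \<mu> by (simp add: field_simps)
        also have "\<dots> \<le> real d * pmf B k"
          using large[OF that] by (intro mult_left_mono) auto
        finally show ?thesis .
      qed
    qed (use \<open>1 \<le> d\<close> t in \<open>auto simp: W_def\<close>)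
    finally show ?thesis .
  next
    case False
    then have "{a. image_mset a (mset_set {..<d}) = M} = {}"
      by auto
    then show ?thesis
      using r by simp
  qed
  have "multiset_eq_prob d N p \<le> exp 1 * real d * r ^ card K"
    unfolding multiset_eq_prob_def by (rule prob_pair_pmf_same_value_le) (rule fibre)
  also have "r ^ card K \<le> r powr (sqrt (real N * p) / 16)"
    using r K by (simp add: powr_realpow[symmetric] powr_mono')
  finally show ?thesis
    using \<open>1 \<le> d\<close> by (simp add: r_def mult_left_mono)
qed

lemma mult_powr_div_antimono:
  fixes c E t t' :: real
  assumes "0 < c" "1 \<le> E" "0 < t'" "t' \<le> t"
  shows "t * (c / t) powr E \<le> t' * (c / t') powr E"
proof -
  have eq: "x * (c / x) powr E = c powr E * x powr (1 - E)" if "0 < x" for x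
    using that by (simp add: powr_divide powr_diff)
  have "t powr (1 - E) \<le> t' powr (1 - E)"
    using assms by (intro powr_mono2') auto
  then show ?thesis
    using assms by (simp add: eq)
qed

text \<open>
  Choosing t = d / (14 sqrt (N p)) cancels the factor d, and the resulting bound is antitone in t,
  so it may be evaluated at any smaller admissible t.
\<close>

lemma multiset_eq_prob_le_uniform:
  assumes p: "0 < p" "p \<le> 1/2" and \<mu>: "1024 \<le> real N * p"
    and t: "16 \<le> t" "14 * sqrt (real N * p) * t \<le> real d"
  shows "multiset_eq_prob d N p
    \<le> 14 * exp 1 * sqrt (real N * p) * (t * (16 / t) powr (sqrt (real N * p) / 32))"
proof -
  define \<mu> where "\<mu> = real N * p"
  define t' where "t' = real d / (14 * sqrt \<mu>)"
  define E where "E = sqrt \<mu> / 32"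
  have "0 < \<mu>"
    using \<mu> by (simp add: \<mu>_def)
  have "t \<le> t'"
    using t \<open>0 < \<mu>\<close> by (simp add: t'_def \<mu>_def field_simps)
  have d: "real d = 14 * sqrt \<mu> * t'"
    using \<open>0 < \<mu>\<close> by (simp add: t'_def)
  have "1 \<le> E"
    using \<mu> real_sqrt_le_mono[of "32\<^sup>2" \<mu>] by (simp add: E_def \<mu>_def)
  have "multiset_eq_prob d N p \<le> exp 1 * real d * (4 / sqrt t') powr (sqrt \<mu> / 16)"
    using multiset_eq_prob_le[OF p \<mu>, of t' d] t \<open>t \<le> t'\<close> d by (simp add: \<mu>_def)
  also have "(4 / sqrt t') powr (sqrt \<mu> / 16) = ((4 / sqrt t') powr 2) powr E"
    by (simp add: E_def powr_powr)
  also have "(4 / sqrt t') powr 2 = 16 / t'"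
    using t \<open>t \<le> t'\<close> by (simp add: power_divide)
  also have "exp 1 * real d * (16 / t') powr E = 14 * exp 1 * sqrt \<mu> * (t' * (16 / t') powr E)"
    by (simp add: d)
  also have "\<dots> \<le> 14 * exp 1 * sqrt \<mu> * (t * (16 / t) powr E)"
    using t \<open>t \<le> t'\<close> \<open>1 \<le> E\<close> \<open>0 < \<mu>\<close> by (intro mult_left_mono mult_powr_div_antimono) auto
  finally show ?thesis
    by (simp add: E_def \<mu>_def)
qed

lemma half_le_of_diff_sqrt_le:
  fixes x y :: real
  assumes "4 \<le> x" "x - sqrt x \<le> y"
  shows "x / 2 \<le> y"
proof -
  have "2 \<le> sqrt x"
    using assms by (simp add: real_le_rsqrt)
  then have "2 * sqrt x \<le> x"
    using assms real_sqrt_mult_self[of x] mult_right_mono[of 2 "sqrt x" "sqrt x"] by simp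
  then show ?thesis
    using assms by linarith
qed

text \<open>
  The constant 448 = 16 * 28 makes t = sqrt (n p) / 28 at least 16, and 46 / 32 > sqrt 2
  accounts for N p \<ge> n p / 2.
\<close>

lemma multiset_eq_prob_le_explicit:
  assumes p: "0 \<le> p" "p \<le> 1/2"
    and N: "real n - sqrt (real n) \<le> real N" "N \<le> n"
    and d: "real n * p / 2 \<le> real d" and s: "448\<^sup>2 \<le> real n * p"
  shows "multiset_eq_prob d N p
    \<le> exp 1 / 2 * (real n * p) * (448 / sqrt (real n * p)) powr (sqrt (real n * p) / 46)"
proof -
  define s where "s = real n * p"
  define \<mu> where "\<mu> = real N * p"
  define t where "t = sqrt s / 28"
  have "0 < p" "0 < s"
    using s p by (auto simp: s_def intro: ccontr)
  have "2 * s \<le> real n"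
    using p mult_left_mono[of p "1/2" "real n"] by (simp add: s_def)
  then have "real n / 2 \<le> real N"
    using half_le_of_diff_sqrt_le[of "real n" "real N"] N s by (simp add: s_def)
  then have \<mu>: "s / 2 \<le> \<mu>" "\<mu> \<le> s"
    using N \<open>0 < p\<close> by (auto simp: s_def \<mu>_def intro: mult_right_mono)
  have "448 \<le> sqrt s"
    using s real_sqrt_le_mono[of "448\<^sup>2" s] by (simp add: s_def)
  then have "16 \<le> t"
    by (simp add: t_def)
  have "14 * sqrt \<mu> * t \<le> 14 * sqrt s * t"
    using \<mu> \<open>16 \<le> t\<close> by (intro mult_right_mono mult_left_mono real_sqrt_le_mono) auto
  also have "\<dots> = s / 2"
    using \<open>0 < s\<close> by (simp add: t_def)
  finally have "14 * sqrt \<mu> * t \<le> real d"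
    using d by (simp add: s_def)
  have "sqrt s / 46 \<le> sqrt \<mu> / 32"
  proof -
    have "sqrt 2 \<le> sqrt ((46 / 32)\<^sup>2)"
      by (intro real_sqrt_le_mono) (simp add: power2_eq_square)
    then have "sqrt s / (46 / 32) \<le> sqrt s / sqrt 2"
      using \<open>0 < s\<close> by (intro divide_left_mono) auto
    also have "sqrt s / sqrt 2 \<le> sqrt \<mu>"
      using \<mu> by (simp flip: real_sqrt_divide)
    finally show ?thesis
      by simp
  qed
  have "multiset_eq_prob d N p \<le> 14 * exp 1 * sqrt \<mu> * (t * (16 / t) powr (sqrt \<mu> / 32))"
    using multiset_eq_prob_le_uniform[OF \<open>0 < p\<close> p(2), of N t d] \<mu> s \<open>16 \<le> t\<close>
      \<open>14 * sqrt \<mu> * t \<le> real d\<close> by (simp add: \<mu>_def s_def)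
  also have "\<dots> \<le> 14 * exp 1 * sqrt s * (t * (16 / t) powr (sqrt s / 46))"
    using \<mu> \<open>16 \<le> t\<close> \<open>sqrt s / 46 \<le> sqrt \<mu> / 32\<close>
    by (intro mult_mono powr_mono' real_sqrt_le_mono) auto
  also have "\<dots> = exp 1 / 2 * s * (448 / sqrt s) powr (sqrt s / 46)"
    using \<open>0 < s\<close> by (simp add: t_def real_div_sqrt field_simps)
  finally show ?thesis
    unfolding s_def .
qed

theorem mainTheorem17:
  fixes p :: "nat \<Rightarrow> real" and N d :: "nat \<Rightarrow> nat"
  assumes p_range: "\<And>n. 0 \<le> p n \<and> p n \<le> 1/2"
    and np_inf: "filterlim (\<lambda>n. real n * p n) at_top sequentially"
    and N_range: "\<And>n. real n - sqrt (real n) \<le> real (N n) \<and> N n \<le> n"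
    and d_bound: "\<And>n. real (d n) \<ge> real n * p n / 2"
  shows "\<exists>c>0. \<forall>\<^sub>F n in sequentially.
           multiset_eq_prob (d n) (N n) (p n)
             \<le> exp (- c * sqrt (real n * p n) * ln (real n * p n))"
proof -
  have "\<forall>\<^sub>F s in at_top. 448\<^sup>2 \<le> s \<and>
      exp 1 / 2 * s * (448 / sqrt s) powr (sqrt s / 46) \<le> exp (- (1/100) * sqrt s * ln s)"
    by (intro eventually_conj eventually_ge_at_top) real_asymp
  then have "\<forall>\<^sub>F n in sequentially. 448\<^sup>2 \<le> real n * p n \<and>
      exp 1 / 2 * (real n * p n) * (448 / sqrt (real n * p n)) powr (sqrt (real n * p n) / 46)
        \<le> exp (- (1/100) * sqrt (real n * p n) * ln (real n * p n))"
    using np_inf by (rule eventually_compose_filterlim)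
  then have "\<forall>\<^sub>F n in sequentially. multiset_eq_prob (d n) (N n) (p n)
      \<le> exp (- (1/100) * sqrt (real n * p n) * ln (real n * p n))"
  proof (rule eventually_mono)
    fix n
    assume "448\<^sup>2 \<le> real n * p n \<and>
      exp 1 / 2 * (real n * p n) * (448 / sqrt (real n * p n)) powr (sqrt (real n * p n) / 46)
        \<le> exp (- (1/100) * sqrt (real n * p n) * ln (real n * p n))"
    with multiset_eq_prob_le_explicit[of "p n" n "N n" "d n"] p_range[of n] N_range[of n] d_bound[of n]
    show "multiset_eq_prob (d n) (N n) (p n) \<le> exp (- (1/100) * sqrt (real n * p n) * ln (real n * p n))"
      by linarith
  qed
  then show ?thesis
    by (intro exI[of _ "1/100"]) auto
qed

end
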